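(* Under the standing setting, fix $0<t\le1$, $x\in\mathbb{R}^d$ and $0<a_0<a<b<b_0<t$, and let $W_1\le W_2$ be time dependent Lyapunov functions on $[0,t]$ with $W_2\le c_0Z^{1-\sigma}$ for some $c_0>0$, $\sigma\in(0,1)$, and let $1\le w\in C^{1,2}((0,t)\times\mathbb{R}^d)$ satisfy: $w^{-2}\partial_sw$ and $w^{-2}\nabla_yw$ are bounded on $Q(a_0,b_0)$; for some $k>d+2$ and constants $c_1,\dots,c_9\ge1$, on $Q(a_0,b_0)$: $w\le c_1w^{\frac{k-2}{k}}W_1^{\frac2k}$, $|Q\nabla_yw|\le c_2w^{\frac{k-1}{k}}W_1^{\frac1k}$, $|\mathrm{Tr}(QD_y^2w)|\le c_3w^{\frac{k-2}{k}}W_1^{\frac2k}$, $|\partial_sw|\le c_4w^{\frac{k-2}{k}}W_1^{\frac2k}$, $|\sum_iD_iq_{ij}|\le c_5w^{-\frac1k}W_2^{\frac1k}$ for each $j$, $|F|\le c_6w^{-\frac1k}W_2^{\frac1k}$, $V^{\frac12}\le c_7w^{-\frac1k}W_2^{\frac1k}$, $|\Delta_yw|\le c_8w^{\frac{k-2}{k}}W_1^{\frac2k}$, $|Q\nabla_yW_1|\le c_9w^{-\frac1k}W_1W_2^{\frac1k}$; and for every $n$, $g_n^0(t,\cdot,x,\cdot)\in L^\infty(Q(a_0,b_0))$. Then for every $n\in\mathbb{N}$, with $Q_n=(q^{(n)}_{ij})$ in place of $Q$: $w^{-2}\partial_sw$ and $w^{-2}\nabla_yw$ are bounded on $Q(a_0,b_0)$,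 and on $Q(a_0,b_0)$ we have $w\le c_1w^{\frac{k-2}{k}}W_1^{\frac2k}$, $|Q_n\nabla_yw|\le 2c_2w^{\frac{k-1}{k}}W_1^{\frac1k}$, $|\mathrm{Tr}(Q_nD_y^2w)|\le(c_3+\eta c_8)w^{\frac{k-2}{k}}W_1^{\frac2k}$, $|\partial_sw|\le c_4w^{\frac{k-2}{k}}W_1^{\frac2k}$, $|\sum_iD_iq^{(n)}_{ij}|\le(c_5+4c_9)w^{-\frac1k}W_2^{\frac1k}$ for each $j$, $|F|\le c_6w^{-\frac1k}W_2^{\frac1k}$, $V^{\frac12}\le c_7w^{-\frac1k}W_2^{\frac1k}$, and $g_n^0(t,\cdot,x,\cdot)\in L^\infty(Q(a_0,b_0))$; i.e. the operator $\mathscr{A}_n$ satisfies the same hypotheses with constants $c_1,2c_2,c_3+\eta c_8,c_4,c_5+4c_9,c_6,c_7$.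
   Context: Standing setting. Let $d\ge1$ and $q_{ij},F_i,V:[0,1]\times\mathbb{R}^d\to\mathbb{R}$. For smooth $\varphi$ put $\mathscr{A}(t)\varphi=\sum_{i,j}q_{ij}(t,\cdot)D_{ij}\varphi+\sum_iF_i(t,\cdot)D_i\varphi-V(t,\cdot)\varphi$, $\mathscr{A}_0(t)=\mathscr{A}(t)+V(t)$, $F=(F_i)$, $Q=(q_{ij})$. Assume: (H1) for some $\varsigma\in(0,1)$, $q_{ij},F_i,V\in C^{\varsigma/2,\varsigma}_{\mathrm{loc}}([0,1]\times\mathbb{R}^d)$ and $q_{ij}\in C^{0,1}((0,1)\times\mathbb{R}^d)$; (H2) $Q$ symmetric, $\sum q_{ij}\xi_i\xi_j\ge\eta|\xi|^2$ for some $\eta>0$; (H3) $V\ge0$; (H4) there are $0\le Z\in C^2(\mathbb{R}^d)$, $Z\to\infty$ at infinity, and $M\ge0$ with $\mathscr{A}(t)Z\le M$ and $\eta\Delta Z+F(t)\cdot\nabla Z-V(t)Z\le M$; (H5) there is $0\le Z_0\in C^2(\mathbb{R}^d)$, $Z_0\to\infty$ at infinity, with $\mathscr{A}_0(t)Z_0\le M$ and $\eta\Delta Z_0+F(t)\cdot\nabla Z_0\le M$. Definition. A time dependent Lyapunov function on $[0,t]$ is $0\le W\in C([0,t]\times\mathbb{R}^d)\cap C^{1,2}((0,t)\times\mathbb{R}^d)$ with $W\le Z$, $W(s,x)\to\infty$ as $|x|\to\infty$ uniformly for $s$ in compact subsets of $[0,t)$, and for some $0\le h\in L^1((0,t))$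 and every $s\in(0,t)$: $\partial_sW-\mathscr{A}(s)W\ge-hW$ and $\partial_sW-(\eta\Delta W+F\cdot\nabla W-VW)\ge-hW$ on $\mathbb{R}^d$. Approximation: fix $\varphi\in C_c^\infty(\mathbb{R})$ with $\varphi\equiv1$ on $(-1,1)$, $\varphi\equiv0$ outside $(-2,2)$, $|\tau\varphi'(\tau)|\le2$; set $\varphi_n(s,y)=\varphi(W_1(s,y)/n)$, $q^{(n)}_{ij}=\varphi_nq_{ij}+(1-\varphi_n)\eta\delta_{ij}$, $\mathscr{A}_n(s)=\sum q^{(n)}_{ij}(s)D_{ij}+\sum F_j(s)D_j-V(s)$, $\mathscr{A}^0_n=\mathscr{A}_n+V$; $g_n^0$ is the Green kernel of the evolution family associated with $\mathscr{A}_n^0$. $Q(a,b)=(a,b)\times\mathbb{R}^d$.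
   Formalization: The cut-off $\varphi$ also takes values in [0,1], and the bounds on $\sum_iD_iq_{ij}$ and $\sum_iD_iq^{(n)}_{ij}$ hold, as hypothesis and as conclusion, only at points where all the partial derivatives involved exist. Apart from conventions, each condition added here is assumed in the paper as well or is needed for the statement above to hold. *)

theory Defs
  imports "HOL-Analysis.Analysis"
begin

definition pdt :: "(real \<Rightarrow> real^'d \<Rightarrow> real) \<Rightarrow> real \<Rightarrow> real^'d \<Rightarrow> real" where
  "pdt f s y = deriv (\<lambda>r. f r y) s"

definition pDy :: "'d::finite \<Rightarrow> (real \<Rightarrow> real^'d \<Rightarrow> real) \<Rightarrow> real \<Rightarrow> real^'d \<Rightarrow> real" where
  "pDy i f s y = deriv (\<lambda>h. f s (y + h *\<^sub>R axis i 1)) 0"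

definition pDyy :: "'d::finite \<Rightarrow> 'd \<Rightarrow> (real \<Rightarrow> real^'d \<Rightarrow> real) \<Rightarrow> real \<Rightarrow> real^'d \<Rightarrow> real" where
  "pDyy i j f = pDy i (pDy j f)"

definition grad :: "(real \<Rightarrow> real^'d::finite \<Rightarrow> real) \<Rightarrow> real \<Rightarrow> real^'d \<Rightarrow> real^'d" where
  "grad f s y = (\<chi> i. pDy i f s y)"

definition lap :: "(real \<Rightarrow> real^'d::finite \<Rightarrow> real) \<Rightarrow> real \<Rightarrow> real^'d \<Rightarrow> real" where
  "lap f s y = (\<Sum>i\<in>UNIV. pDyy i i f s y)"

definition pdiff_y :: "(real \<Rightarrow> real^'d::finite \<Rightarrow> real) \<Rightarrow> real \<Rightarrow> real^'d \<Rightarrow> bool" where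
  "pdiff_y f s y \<longleftrightarrow> (\<forall>i. (\<lambda>h. f s (y + h *\<^sub>R axis i 1)) differentiable (at 0))"

definition opA :: "('d::finite \<Rightarrow> 'd \<Rightarrow> real \<Rightarrow> real^'d \<Rightarrow> real) \<Rightarrow> ('d \<Rightarrow> real \<Rightarrow> real^'d \<Rightarrow> real)
    \<Rightarrow> (real \<Rightarrow> real^'d \<Rightarrow> real) \<Rightarrow> (real \<Rightarrow> real^'d \<Rightarrow> real) \<Rightarrow> real \<Rightarrow> real^'d \<Rightarrow> real" where
  "opA q F V f s y = (\<Sum>i\<in>UNIV. \<Sum>j\<in>UNIV. q i j s y * pDyy i j f s y)
      + (\<Sum>i\<in>UNIV. F i s y * pDy i f s y) - V s y * f s y"

definition etaI :: "real \<Rightarrow> 'd::finite \<Rightarrow> 'd \<Rightarrow> real \<Rightarrow> real^'d \<Rightarrow> real" where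
  "etaI \<eta> i j s y = (if i = j then \<eta> else 0)"

definition zeroV :: "real \<Rightarrow> real^'d::finite \<Rightarrow> real" where
  "zeroV s y = 0"

definition C12 :: "real set \<Rightarrow> (real \<Rightarrow> real^'d::finite \<Rightarrow> real) \<Rightarrow> bool" where
  "C12 I f \<longleftrightarrow>
     (\<forall>s\<in>I. \<forall>y. (\<lambda>r. f r y) differentiable (at s)
        \<and> pdiff_y f s y \<and> (\<forall>j. pdiff_y (pDy j f) s y))
   \<and> continuous_on (I \<times> UNIV) (\<lambda>(s,y). f s y)
   \<and> continuous_on (I \<times> UNIV) (\<lambda>(s,y). pdt f s y)
   \<and> (\<forall>i. continuous_on (I \<times> UNIV) (\<lambda>(s,y). pDy i f s y))
   \<and> (\<forall>i j. continuous_on (I \<times> UNIV) (\<lambda>(s,y). pDyy i j f s y))"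

definition holder_loc :: "real \<Rightarrow> (real \<times> (real^'d::finite)) set \<Rightarrow> (real \<Rightarrow> real^'d \<Rightarrow> real) \<Rightarrow> bool" where
  "holder_loc \<alpha> S f \<longleftrightarrow> (\<forall>K. compact K \<and> K \<subseteq> S \<longrightarrow>
     (\<exists>C. \<forall>(s,y)\<in>K. \<forall>(s',y')\<in>K. \<bar>f s y - f s' y'\<bar> \<le> C * (\<bar>s - s'\<bar> powr (\<alpha>/2) + dist y y' powr \<alpha>)))"

definition C01 :: "(real \<times> (real^'d::finite)) set \<Rightarrow> (real \<Rightarrow> real^'d \<Rightarrow> real) \<Rightarrow> bool" where
  "C01 S f \<longleftrightarrow> continuous_on S (\<lambda>(s,y). f s y) \<and>
     (\<forall>K. compact K \<and> K \<subseteq> S \<longrightarrow> (\<exists>L. \<forall>s y y'. (s,y) \<in> K \<and> (s,y') \<in> K \<longrightarrow>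
        \<bar>f s y - f s y'\<bar> \<le> L * dist y y'))"

definition tdlf :: "('d::finite \<Rightarrow> 'd \<Rightarrow> real \<Rightarrow> real^'d \<Rightarrow> real) \<Rightarrow> ('d \<Rightarrow> real \<Rightarrow> real^'d \<Rightarrow> real)
    \<Rightarrow> (real \<Rightarrow> real^'d \<Rightarrow> real) \<Rightarrow> real \<Rightarrow> (real^'d \<Rightarrow> real) \<Rightarrow> real
    \<Rightarrow> (real \<Rightarrow> real^'d \<Rightarrow> real) \<Rightarrow> bool" where
  "tdlf q F V \<eta> Z t W \<longleftrightarrow>
     (\<forall>s\<in>{0..t}. \<forall>y. 0 \<le> W s y \<and> W s y \<le> Z y)
   \<and> continuous_on ({0..t} \<times> UNIV) (\<lambda>(s,y). W s y)
   \<and> C12 {0<..<t} W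
   \<and> (\<forall>K. compact K \<and> K \<subseteq> {0..<t} \<longrightarrow>
        (\<forall>R. \<exists>r. \<forall>s\<in>K. \<forall>y. r \<le> norm y \<longrightarrow> R \<le> W s y))
   \<and> (\<exists>h. (\<forall>s\<in>{0<..<t}. 0 \<le> h s) \<and> h absolutely_integrable_on {0<..<t}
        \<and> (\<forall>s\<in>{0<..<t}. \<forall>y.
              pdt W s y - opA q F V W s y \<ge> - h s * W s y
            \<and> pdt W s y - opA (etaI \<eta>) F V W s y \<ge> - h s * W s y))"

definition qn :: "(real \<Rightarrow> real) \<Rightarrow> (real \<Rightarrow> real^'d::finite \<Rightarrow> real) \<Rightarrow> real
    \<Rightarrow> ('d \<Rightarrow> 'd \<Rightarrow> real \<Rightarrow> real^'d \<Rightarrow> real) \<Rightarrow> nat \<Rightarrow> 'd \<Rightarrow> 'd \<Rightarrow> real \<Rightarrow> real^'d \<Rightarrow> real" where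
  "qn \<phi> W1 \<eta> q n i j s y =
     \<phi> (W1 s y / real n) * q i j s y + (1 - \<phi> (W1 s y / real n)) * (if i = j then \<eta> else 0)"

definition Qgrad :: "('d::finite \<Rightarrow> 'd \<Rightarrow> real \<Rightarrow> real^'d \<Rightarrow> real) \<Rightarrow> (real \<Rightarrow> real^'d \<Rightarrow> real)
    \<Rightarrow> real \<Rightarrow> real^'d \<Rightarrow> real^'d" where
  "Qgrad q f s y = (\<chi> i. \<Sum>j\<in>UNIV. q i j s y * pDy j f s y)"

definition trQD2 :: "('d::finite \<Rightarrow> 'd \<Rightarrow> real \<Rightarrow> real^'d \<Rightarrow> real) \<Rightarrow> (real \<Rightarrow> real^'d \<Rightarrow> real)
    \<Rightarrow> real \<Rightarrow> real^'d \<Rightarrow> real" where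
  "trQD2 q f s y = (\<Sum>i\<in>UNIV. \<Sum>j\<in>UNIV. q i j s y * pDyy j i f s y)"

definition divq :: "('d::finite \<Rightarrow> 'd \<Rightarrow> real \<Rightarrow> real^'d \<Rightarrow> real) \<Rightarrow> 'd \<Rightarrow> real \<Rightarrow> real^'d \<Rightarrow> real" where
  "divq q j s y = (\<Sum>i\<in>UNIV. pDy i (q i j) s y)"

definition Linf_on :: "(real \<times> (real^'d::finite)) set \<Rightarrow> (real \<times> (real^'d) \<Rightarrow> real) \<Rightarrow> bool" where
  "Linf_on S f \<longleftrightarrow> f \<in> borel_measurable (lebesgue_on S) \<and> (\<exists>B. AE z in lebesgue_on S. \<bar>f z\<bar> \<le> B)"

end

theory Submission
  imports Defs
begin

text \<open>
  Pointwise \<open>Q\<^sub>n = p Q + (1 - p) \<eta> I\<close> with \<open>p = \<phi>(W\<^sub>1/n) \<in> [0,1]\<close>. Ellipticity gives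
  \<open>\<eta> |\<xi>| \<le> |Q \<xi>|\<close>, hence \<open>|Q\<^sub>n \<nabla>w| \<le> |Q \<nabla>w|\<close> and
  \<open>|Tr(Q\<^sub>n D\<^sup>2w)| \<le> |Tr(Q D\<^sup>2w)| + \<eta> |\<Delta>w|\<close>. Differentiating the cut-off adds to
  \<open>\<Sum>\<^sub>i D\<^sub>i q\<^sup>n\<^sub>i\<^sub>j\<close> the term \<open>\<phi>'(\<tau>)/n \<cdot> ((Q - \<eta> I) \<nabla>W\<^sub>1)\<^sub>j\<close>, \<open>\<tau> = W\<^sub>1/n\<close>, whose size is at most
  \<open>2 |\<tau> \<phi>'(\<tau>)| |Q \<nabla>W\<^sub>1| / W\<^sub>1 \<le> 4 c\<^sub>9 w\<^sup>-\<^sup>1\<^sup>/\<^sup>k W\<^sub>2\<^sup>1\<^sup>/\<^sup>k\<close>.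
\<close>

lemma DERIV_mult_vanishing:
  fixes f g :: "real \<Rightarrow> real"
  assumes "(f has_real_derivative f') (at a)" "f a = 0" "isCont g a"
  shows "((\<lambda>h. f h * g h) has_real_derivative f' * g a) (at a)"
proof -
  have "((\<lambda>h. (f h - f a) / (h - a)) \<longlongrightarrow> f') (at a)"
    using assms(1) has_field_derivative_iff by blast
  moreover have "(g \<longlongrightarrow> g a) (at a)" using assms(3) isCont_def by blast
  ultimately have "((\<lambda>h. (f h - f a) / (h - a) * g h) \<longlongrightarrow> f' * g a) (at a)"
    by (rule tendsto_mult)
  then have "((\<lambda>h. (f h * g h - f a * g a) / (h - a)) \<longlongrightarrow> f' * g a) (at a)"
    using assms(2) by simp
  then show ?thesis using has_field_derivative_iff by blast
qed

lemma differentiable_of_blend_differentiable: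
  fixes u g :: "real \<Rightarrow> real"
  assumes du: "(u has_real_derivative u') (at a)" and ua: "u a \<noteq> 0"
    and dF: "(\<lambda>h. u h * g h + (1 - u h) * c) differentiable (at a)"
  shows "g differentiable (at a)"
proof -
  obtain F' where dF': "((\<lambda>h. u h * g h + (1 - u h) * c) has_real_derivative F') (at a)"
    using dF real_differentiable_def by blast
  obtain d where d: "d > 0" "\<And>x. dist x a < d \<Longrightarrow> dist (u x) (u a) < \<bar>u a\<bar>"
    using DERIV_isCont[OF du] ua unfolding continuous_at_eps_delta by (metis zero_less_abs_iff)
  \<comment> \<open>near \<open>a\<close>, \<open>u\<close> does not vanish and \<open>g\<close> is recovered from the blend by division\<close>
  have D: "((\<lambda>h. ((u h * g h + (1 - u h) * c) - c) / u h + c) has_real_derivative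
            ((F' - 0) * u a - ((u a * g a + (1 - u a) * c) - c) * u') / (u a * u a) + 0) (at a)"
    by (intro derivative_intros DERIV_divide dF' du ua)
  have "(g has_real_derivative
            ((F' - 0) * u a - ((u a * g a + (1 - u a) * c) - c) * u') / (u a * u a) + 0) (at a)"
  proof (rule has_field_derivative_transform_within[OF D d(1)])
    fix x :: real assume "dist x a < d"
    then have "u x \<noteq> 0" using d(2)[of x] by (auto simp: dist_real_def)
    then show "((u x * g x + (1 - u x) * c) - c) / u x + c = g x"
      by (simp add: field_simps)
  qed simp
  then show ?thesis using real_differentiable_def by blast
qed

text \<open>Where \<open>u\<close> vanishes only continuity of \<open>g\<close> is needed, so \<open>q\<close> need not be differentiable
  where the cut-off is zero.\<close>

lemma deriv_blend:
  fixes u g :: "real \<Rightarrow> real"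
  assumes du: "(u has_real_derivative u') (at a)" and cg: "isCont g a"
    and dF: "(\<lambda>h. u h * g h + (1 - u h) * c) differentiable (at a)"
  shows "deriv (\<lambda>h. u h * g h + (1 - u h) * c) a
            = u' * (g a - c) + (if u a = 0 then 0 else u a * deriv g a)"
proof -
  have blend_eq: "(\<lambda>h. u h * g h + (1 - u h) * c) = (\<lambda>h. u h * (g h - c) + c)"
    by (auto simp: algebra_simps)
  show ?thesis
  proof (cases "u a = 0")
    case True
    have "isCont (\<lambda>h. g h - c) a" using cg by (intro continuous_intros)
    then have "((\<lambda>h. u h * (g h - c) + c) has_real_derivative u' * (g a - c) + 0) (at a)"
      by (intro derivative_intros DERIV_mult_vanishing[OF du True])
    then show ?thesis unfolding blend_eq using True DERIV_imp_deriv by fastforce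
  next
    case False
    have "(g has_real_derivative deriv g a) (at a)"
      using differentiable_of_blend_differentiable[OF du False dF]
      by (simp add: DERIV_deriv_iff_real_differentiable)
    then have "((\<lambda>h. u h * (g h - c) + c) has_real_derivative
                  u' * (g a - c) + (deriv g a - 0) * u a + 0) (at a)"
      by (intro DERIV_add DERIV_mult du DERIV_diff DERIV_const)
    then show ?thesis unfolding blend_eq using False DERIV_imp_deriv by (fastforce simp: algebra_simps)
  qed
qed

lemma elliptic_norm_ge:
  fixes Q :: "'d::finite \<Rightarrow> 'd \<Rightarrow> real" and \<xi> :: "real^'d"
  assumes "\<eta> * (norm \<xi>)\<^sup>2 \<le> (\<Sum>i\<in>UNIV. \<Sum>j\<in>UNIV. Q i j * \<xi>$i * \<xi>$j)"
  shows "\<eta> * norm \<xi> \<le> norm (\<chi> i. \<Sum>j\<in>UNIV. Q i j * \<xi>$j)"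
proof -
  let ?v = "\<chi> i. \<Sum>j\<in>UNIV. Q i j * \<xi>$j"
  have "(\<Sum>i\<in>UNIV. \<Sum>j\<in>UNIV. Q i j * \<xi>$i * \<xi>$j) = \<xi> \<bullet> ?v"
    by (simp add: inner_vec_def sum_distrib_left mult_ac)
  also have "\<dots> \<le> norm \<xi> * norm ?v" by (rule norm_cauchy_schwarz)
  finally have "\<eta> * norm \<xi> * norm \<xi> \<le> norm ?v * norm \<xi>"
    using assms by (simp add: power2_eq_square mult_ac)
  then show ?thesis
    by (cases "norm \<xi> = 0") (auto simp: mult_le_cancel_right)
qed

lemma has_real_derivative_pDy:
  assumes "pdiff_y f s y"
  shows "((\<lambda>h. f s (y + h *\<^sub>R axis i 1)) has_real_derivative pDy i f s y) (at 0)"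
  using assms unfolding pdiff_y_def pDy_def by (simp add: DERIV_deriv_iff_real_differentiable)

lemma isCont_line_of_continuous_on:
  fixes f :: "real \<Rightarrow> 'a::real_normed_vector \<Rightarrow> real"
  assumes "continuous_on (A \<times> UNIV) (\<lambda>(s,y). f s y)" "open A" "s \<in> A"
  shows "isCont (\<lambda>h. f s (y + h *\<^sub>R v)) 0"
proof -
  have "open (A \<times> (UNIV :: 'a set))" using assms(2) by (simp add: open_Times)
  then have cont_f: "isCont (\<lambda>(s,y). f s y) (s, y + 0 *\<^sub>R v)"
    using assms(1,3) continuous_on_eq_continuous_at by fastforce
  have "isCont (\<lambda>h. (s, y + h *\<^sub>R v)) 0" by (intro continuous_intros)
  from this cont_f have "isCont (\<lambda>h. (\<lambda>(s,y). f s y) (s, y + h *\<^sub>R v)) 0"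
    by (rule isCont_o2)
  then show ?thesis by simp
qed

lemma sum_blend_delta:
  fixes X :: "'d::finite \<Rightarrow> real"
  shows "(\<Sum>j\<in>UNIV. (p * Q j + (1 - p) * (if i = j then \<eta> else 0)) * X j)
           = p * (\<Sum>j\<in>UNIV. Q j * X j) + (1 - p) * \<eta> * X i"
proof -
  have "(\<Sum>j\<in>UNIV. (p * Q j + (1 - p) * (if i = j then \<eta> else 0)) * X j)
      = (\<Sum>j\<in>UNIV. p * (Q j * X j) + (if i = j then (1 - p) * \<eta> * X j else 0))"
    by (rule sum.cong) (auto simp: algebra_simps)
  then show ?thesis by (simp add: sum.distrib sum_distrib_left)
qed

lemma Qgrad_qn:
  "Qgrad (qn \<phi> W \<eta> q n) f s y
     = \<phi> (W s y / real n) *\<^sub>R Qgrad q f s y + ((1 - \<phi> (W s y / real n)) * \<eta>) *\<^sub>R grad f s y"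
  unfolding vec_eq_iff Qgrad_def grad_def qn_def
  using sum_blend_delta[where X = "\<lambda>j. pDy j f s y"] by simp

lemma trQD2_qn:
  "trQD2 (qn \<phi> W \<eta> q n) f s y
     = \<phi> (W s y / real n) * trQD2 q f s y + (1 - \<phi> (W s y / real n)) * \<eta> * lap f s y"
  unfolding trQD2_def lap_def qn_def sum_blend_delta
  by (simp add: sum.distrib sum_distrib_left sum_distrib_right mult.assoc)

lemma norm_Qgrad_qn_le:
  assumes ell: "\<And>\<xi>::real^'d::finite. \<eta> * (norm \<xi>)\<^sup>2 \<le> (\<Sum>i\<in>UNIV. \<Sum>j\<in>UNIV. q i j s y * \<xi>$i * \<xi>$j)"
    and "0 \<le> \<eta>" "0 \<le> \<phi> (W s y / real n)" "\<phi> (W s y / real n) \<le> 1"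
  shows "norm (Qgrad (qn \<phi> W \<eta> q n) f s y) \<le> norm (Qgrad q f s y)"
proof -
  define p where "p = \<phi> (W s y / real n)"
  have p: "0 \<le> p" "p \<le> 1" using assms(3,4) by (auto simp: p_def)
  have "\<eta> * norm (grad f s y) \<le> norm (\<chi> i. \<Sum>j\<in>UNIV. q i j s y * grad f s y $ j)"
    by (rule elliptic_norm_ge[OF ell])
  then have grad_le: "\<eta> * norm (grad f s y) \<le> norm (Qgrad q f s y)"
    by (simp add: Qgrad_def grad_def)
  have "norm (Qgrad (qn \<phi> W \<eta> q n) f s y) \<le> p * norm (Qgrad q f s y) + (1 - p) * (\<eta> * norm (grad f s y))"
    unfolding Qgrad_qn p_def[symmetric]
    using p \<open>0 \<le> \<eta>\<close> norm_triangle_ineq[of "p *\<^sub>R Qgrad q f s y" "((1 - p) * \<eta>) *\<^sub>R grad f s y"]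
    by (simp add: mult.assoc)
  also have "\<dots> \<le> p * norm (Qgrad q f s y) + (1 - p) * norm (Qgrad q f s y)"
    using grad_le p by (simp add: mult_left_mono)
  finally show ?thesis by (simp add: algebra_simps)
qed

lemma abs_trQD2_qn_le:
  assumes "0 \<le> \<eta>" "0 \<le> \<phi> (W s y / real n)" "\<phi> (W s y / real n) \<le> 1"
  shows "\<bar>trQD2 (qn \<phi> W \<eta> q n) f s y\<bar> \<le> \<bar>trQD2 q f s y\<bar> + \<eta> * \<bar>lap f s y\<bar>"
proof -
  define p where "p = \<phi> (W s y / real n)"
  have p: "0 \<le> p" "p \<le> 1" using assms(2,3) by (auto simp: p_def)
  have "\<bar>trQD2 (qn \<phi> W \<eta> q n) f s y\<bar> \<le> p * \<bar>trQD2 q f s y\<bar> + (1 - p) * \<eta> * \<bar>lap f s y\<bar>"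
    unfolding trQD2_qn p_def[symmetric] using p \<open>0 \<le> \<eta>\<close>
    by (simp add: abs_mult abs_triangle_ineq[THEN order_trans])
  also have "\<dots> \<le> 1 * \<bar>trQD2 q f s y\<bar> + 1 * \<eta> * \<bar>lap f s y\<bar>"
    using p \<open>0 \<le> \<eta>\<close> by (intro add_mono mult_right_mono) auto
  finally show ?thesis by simp
qed

lemma abs_sum_grad_shifted_le:
  fixes q :: "'d::finite \<Rightarrow> 'd \<Rightarrow> real \<Rightarrow> real^'d \<Rightarrow> real"
  assumes sym: "\<And>i. q i j s y = q j i s y"
    and ell: "\<And>\<xi>::real^'d. \<eta> * (norm \<xi>)\<^sup>2 \<le> (\<Sum>i\<in>UNIV. \<Sum>j\<in>UNIV. q i j s y * \<xi>$i * \<xi>$j)"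
    and "0 \<le> \<eta>"
  shows "\<bar>\<Sum>i\<in>UNIV. pDy i f s y * (q i j s y - (if i = j then \<eta> else 0))\<bar>
           \<le> 2 * norm (Qgrad q f s y)"
proof -
  have "(\<Sum>i\<in>UNIV. pDy i f s y * (q i j s y - (if i = j then \<eta> else 0)))
      = (\<Sum>i\<in>UNIV. q j i s y * pDy i f s y) - (\<Sum>i\<in>UNIV. if i = j then \<eta> * pDy i f s y else 0)"
    unfolding sum_subtractf[symmetric] by (rule sum.cong) (auto simp: sym algebra_simps)
  then have sum_eq: "(\<Sum>i\<in>UNIV. pDy i f s y * (q i j s y - (if i = j then \<eta> else 0)))
      = Qgrad q f s y $ j - \<eta> * grad f s y $ j"
    by (simp add: Qgrad_def grad_def)
  have "\<eta> * norm (grad f s y) \<le> norm (\<chi> i. \<Sum>j\<in>UNIV. q i j s y * grad f s y $ j)"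
    by (rule elliptic_norm_ge[OF ell])
  then have grad_le: "\<eta> * norm (grad f s y) \<le> norm (Qgrad q f s y)"
    by (simp add: Qgrad_def grad_def)
  have "\<bar>Qgrad q f s y $ j\<bar> \<le> norm (Qgrad q f s y)" by (rule component_le_norm_cart)
  moreover have "\<bar>grad f s y $ j\<bar> \<le> norm (grad f s y)" by (rule component_le_norm_cart)
  then have "\<bar>\<eta> * grad f s y $ j\<bar> \<le> \<eta> * norm (grad f s y)"
    using \<open>0 \<le> \<eta>\<close> by (simp add: abs_mult mult_left_mono)
  ultimately show ?thesis unfolding sum_eq using grad_le by linarith
qed

lemma has_real_derivative_cutoff_line:
  assumes "(\<phi> has_real_derivative \<phi>') (at (W s y / real n))" "pdiff_y W s y"
  shows "((\<lambda>h. \<phi> (W s (y + h *\<^sub>R axis l 1) / real n)) has_real_derivative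
           \<phi>' * (pDy l W s y / real n)) (at 0)"
  using DERIV_chain2[OF _ DERIV_cdivide[OF has_real_derivative_pDy[OF assms(2)]]] assms(1)
  by simp

lemma pdiff_y_of_pdiff_y_qn:
  assumes phi: "(\<phi> has_real_derivative \<phi>') (at (W s y / real n))" and W: "pdiff_y W s y"
    and d: "pdiff_y (qn \<phi> W \<eta> q n i j) s y" and p: "\<phi> (W s y / real n) \<noteq> 0"
  shows "pdiff_y (q i j) s y"
  unfolding pdiff_y_def
proof
  fix l
  have blend: "(\<lambda>h. \<phi> (W s (y + h *\<^sub>R axis l 1) / real n) * q i j s (y + h *\<^sub>R axis l 1)
      + (1 - \<phi> (W s (y + h *\<^sub>R axis l 1) / real n)) * (if i = j then \<eta> else 0)) differentiable (at 0)"
    using d unfolding pdiff_y_def qn_def by blast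
  show "(\<lambda>h. q i j s (y + h *\<^sub>R axis l 1)) differentiable (at 0)"
    using differentiable_of_blend_differentiable[OF has_real_derivative_cutoff_line[OF phi W] _ blend] p
    by simp
qed

lemma divq_qn:
  assumes phi: "(\<phi> has_real_derivative \<phi>') (at (W s y / real n))" and W: "pdiff_y W s y"
    and q: "\<And>i. isCont (\<lambda>h. q i j s (y + h *\<^sub>R axis i 1)) 0"
    and d: "\<And>i. pdiff_y (qn \<phi> W \<eta> q n i j) s y"
  shows "divq (qn \<phi> W \<eta> q n) j s y
     = \<phi>' / real n * (\<Sum>i\<in>UNIV. pDy i W s y * (q i j s y - (if i = j then \<eta> else 0)))
       + (if \<phi> (W s y / real n) = 0 then 0 else \<phi> (W s y / real n) * divq q j s y)"
proof -
  have "pDy i (qn \<phi> W \<eta> q n i j) s y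
     = \<phi>' / real n * (pDy i W s y * (q i j s y - (if i = j then \<eta> else 0)))
       + (if \<phi> (W s y / real n) = 0 then 0 else \<phi> (W s y / real n) * pDy i (q i j) s y)" for i
    using deriv_blend[OF has_real_derivative_cutoff_line[OF phi W] q[of i], where c = "if i = j then \<eta> else 0"] d
    by (simp add: pDy_def qn_def pdiff_y_def)
  then show ?thesis
    unfolding divq_def by (simp add: sum.distrib sum_distrib_left)
qed

lemma abs_divq_qn_le:
  fixes q :: "'d::finite \<Rightarrow> 'd \<Rightarrow> real \<Rightarrow> real^'d \<Rightarrow> real"
  assumes sym: "\<And>i. q i j s y = q j i s y"
    and ell: "\<And>\<xi>::real^'d. \<eta> * (norm \<xi>)\<^sup>2 \<le> (\<Sum>i\<in>UNIV. \<Sum>j\<in>UNIV. q i j s y * \<xi>$i * \<xi>$j)"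
    and "0 \<le> \<eta>" "0 < n" "0 \<le> W s y"
    and phi: "(\<phi> has_real_derivative \<phi>') (at (W s y / real n))"
    and phi_deriv: "\<bar>W s y / real n * \<phi>'\<bar> \<le> 2"
    and p: "0 \<le> \<phi> (W s y / real n)" "\<phi> (W s y / real n) \<le> 1"
    and W: "pdiff_y W s y"
    and q: "\<And>i. isCont (\<lambda>h. q i j s (y + h *\<^sub>R axis i 1)) 0"
    and d: "\<And>i. pdiff_y (qn \<phi> W \<eta> q n i j) s y"
    and B: "0 \<le> B" "norm (Qgrad q W s y) \<le> B * W s y"
    and D: "0 \<le> D" "(\<forall>i. pdiff_y (q i j) s y) \<Longrightarrow> \<bar>divq q j s y\<bar> \<le> D"
  shows "\<bar>divq (qn \<phi> W \<eta> q n) j s y\<bar> \<le> D + 4 * B"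
proof -
  define T where "T = (\<Sum>i\<in>UNIV. pDy i W s y * (q i j s y - (if i = j then \<eta> else 0)))"
  define p where "p = \<phi> (W s y / real n)"
  have "\<bar>T\<bar> \<le> 2 * (B * W s y)"
    unfolding T_def using abs_sum_grad_shifted_le[where q = q and j = j and s = s and y = y and f = W, OF sym ell \<open>0 \<le> \<eta>\<close>] B(2) by linarith
  then have "\<bar>\<phi>' / real n * T\<bar> \<le> \<bar>\<phi>'\<bar> / real n * (2 * (B * W s y))"
    using mult_left_mono[of _ _ "\<bar>\<phi>'\<bar> / real n"] by (simp add: abs_mult)
  also have "\<dots> = 2 * B * \<bar>W s y / real n * \<phi>'\<bar>"
    using \<open>0 \<le> W s y\<close> by (simp add: abs_mult)
  also have "\<dots> \<le> 2 * B * 2"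
    using phi_deriv B(1) by (intro mult_left_mono) auto
  finally have cutoff_term: "\<bar>\<phi>' / real n * T\<bar> \<le> 4 * B" by simp
  have coeff_term: "\<bar>if p = 0 then 0 else p * divq q j s y\<bar> \<le> D"
  proof (cases "p = 0")
    case False
    then have "\<bar>divq q j s y\<bar> \<le> D"
      using D(2) pdiff_y_of_pdiff_y_qn[OF phi W d] by (simp add: p_def)
    moreover have "\<bar>p * divq q j s y\<bar> \<le> \<bar>divq q j s y\<bar>"
      using p by (simp add: abs_mult mult_left_le_one_le p_def)
    ultimately show ?thesis using False by simp
  qed (use D(1) in simp)
  show ?thesis
    unfolding divq_qn[OF phi W q d] T_def[symmetric] p_def[symmetric]
    using cutoff_term coeff_term by linarith
qed

theorem lemma6:
  fixes q :: "'d::finite \<Rightarrow> 'd \<Rightarrow> real \<Rightarrow> real^'d \<Rightarrow> real"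
    and F :: "'d \<Rightarrow> real \<Rightarrow> real^'d \<Rightarrow> real"
    and V :: "real \<Rightarrow> real^'d \<Rightarrow> real"
    and \<eta> vsig M :: real
    and Z Z0 :: "real^'d \<Rightarrow> real"
    and \<phi> :: "real \<Rightarrow> real"
    and t a0 a b b0 c0 \<sigma> k c1 c2 c3 c4 c5 c6 c7 c8 c9 :: real
    and x :: "real^'d"
    and W1 W2 w :: "real \<Rightarrow> real^'d \<Rightarrow> real"
    and g :: "nat \<Rightarrow> real \<Rightarrow> real \<Rightarrow> real^'d \<Rightarrow> real^'d \<Rightarrow> real"
  \<comment> \<open>(H1)\<close>
  assumes H1_sigma: "0 < vsig" "vsig < 1"
    and H1_q: "\<And>i j. holder_loc vsig ({0..1} \<times> UNIV) (q i j)"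
    and H1_F: "\<And>i. holder_loc vsig ({0..1} \<times> UNIV) (F i)"
    and H1_V: "holder_loc vsig ({0..1} \<times> UNIV) V"
    and H1_lip: "\<And>i j. C01 ({0<..<1} \<times> UNIV) (q i j)"
  \<comment> \<open>(H2)\<close>
    and H2_sym: "\<And>i j s y. q i j s y = q j i s y"
    and H2_eta: "0 < \<eta>"
    and H2_ell: "\<And>s y (\<xi>::real^'d). s \<in> {0..1} \<Longrightarrow>
                   (\<Sum>i\<in>UNIV. \<Sum>j\<in>UNIV. q i j s y * \<xi>$i * \<xi>$j) \<ge> \<eta> * (norm \<xi>)\<^sup>2"
  \<comment> \<open>(H3)\<close>
    and H3: "\<And>s y. s \<in> {0..1} \<Longrightarrow> 0 \<le> V s y"
  \<comment> \<open>(H4)\<close>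
    and H4_Z: "\<And>y. 0 \<le> Z y" "C12 UNIV (\<lambda>s. Z)" "filterlim Z at_top at_infinity" "0 \<le> M"
    and H4_ineq: "\<And>s y. s \<in> {0..1} \<Longrightarrow> opA q F V (\<lambda>s. Z) s y \<le> M"
                 "\<And>s y. s \<in> {0..1} \<Longrightarrow> opA (etaI \<eta>) F V (\<lambda>s. Z) s y \<le> M"
  \<comment> \<open>(H5)\<close>
    and H5_Z0: "\<And>y. 0 \<le> Z0 y" "C12 UNIV (\<lambda>s. Z0)" "filterlim Z0 at_top at_infinity"
    and H5_ineq: "\<And>s y. s \<in> {0..1} \<Longrightarrow> opA q F zeroV (\<lambda>s. Z0) s y \<le> M"
                 "\<And>s y. s \<in> {0..1} \<Longrightarrow> opA (etaI \<eta>) F zeroV (\<lambda>s. Z0) s y \<le> M"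
  \<comment> \<open>the cut-off function phi\<close>
    and phi_smooth: "\<And>m y. ((deriv ^^ m) \<phi>) differentiable (at y)"
    and phi_one: "\<And>\<tau>. \<tau> \<in> {-1<..<1} \<Longrightarrow> \<phi> \<tau> = 1"
    and phi_zero: "\<And>\<tau>. \<tau> \<notin> {-2<..<2} \<Longrightarrow> \<phi> \<tau> = 0"
    and phi_deriv: "\<And>\<tau>. \<bar>\<tau> * deriv \<phi> \<tau>\<bar> \<le> 2"
    and phi_range: "\<And>\<tau>. 0 \<le> \<phi> \<tau> \<and> \<phi> \<tau> \<le> 1"
  \<comment> \<open>hypotheses of the lemma\<close>
    and t: "0 < t" "t \<le> 1"
    and ab: "0 < a0" "a0 < a" "a < b" "b < b0" "b0 < t"
    and W1: "tdlf q F V \<eta> Z t W1" and W2: "tdlf q F V \<eta> Z t W2"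
    and W12: "\<And>s y. s \<in> {0..t} \<Longrightarrow> W1 s y \<le> W2 s y"
    and c0: "0 < c0" and \<sigma>: "0 < \<sigma>" "\<sigma> < 1"
    and W2Z: "\<And>s y. s \<in> {0..t} \<Longrightarrow> W2 s y \<le> c0 * Z y powr (1 - \<sigma>)"
    and w_ge: "\<And>s y. s \<in> {0<..<t} \<Longrightarrow> 1 \<le> w s y"
    and w_C12: "C12 {0<..<t} w"
    and w_bdd_t: "\<exists>B. \<forall>s\<in>{a0<..<b0}. \<forall>y. \<bar>pdt w s y / (w s y)\<^sup>2\<bar> \<le> B"
    and w_bdd_y: "\<exists>B. \<forall>s\<in>{a0<..<b0}. \<forall>y. norm (grad w s y /\<^sub>R (w s y)\<^sup>2) \<le> B"
    and k: "real CARD('d) + 2 < k"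
    and cs: "1 \<le> c1" "1 \<le> c2" "1 \<le> c3" "1 \<le> c4" "1 \<le> c5" "1 \<le> c6" "1 \<le> c7" "1 \<le> c8" "1 \<le> c9"
    and i1: "\<And>s y. s \<in> {a0<..<b0} \<Longrightarrow>
               w s y \<le> c1 * w s y powr ((k-2)/k) * W1 s y powr (2/k)"
    and i2: "\<And>s y. s \<in> {a0<..<b0} \<Longrightarrow>
               norm (Qgrad q w s y) \<le> c2 * w s y powr ((k-1)/k) * W1 s y powr (1/k)"
    and i3: "\<And>s y. s \<in> {a0<..<b0} \<Longrightarrow>
               \<bar>trQD2 q w s y\<bar> \<le> c3 * w s y powr ((k-2)/k) * W1 s y powr (2/k)"
    and i4: "\<And>s y. s \<in> {a0<..<b0} \<Longrightarrow>
               \<bar>pdt w s y\<bar> \<le> c4 * w s y powr ((k-2)/k) * W1 s y powr (2/k)"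
    and i5: "\<And>s y j. s \<in> {a0<..<b0} \<Longrightarrow> (\<forall>i. pdiff_y (q i j) s y) \<Longrightarrow>
               \<bar>divq q j s y\<bar> \<le> c5 * w s y powr (-1/k) * W2 s y powr (1/k)"
    and i6: "\<And>s y. s \<in> {a0<..<b0} \<Longrightarrow>
               norm (\<chi> i. F i s y) \<le> c6 * w s y powr (-1/k) * W2 s y powr (1/k)"
    and i7: "\<And>s y. s \<in> {a0<..<b0} \<Longrightarrow>
               sqrt (V s y) \<le> c7 * w s y powr (-1/k) * W2 s y powr (1/k)"
    and i8: "\<And>s y. s \<in> {a0<..<b0} \<Longrightarrow>
               \<bar>lap w s y\<bar> \<le> c8 * w s y powr ((k-2)/k) * W1 s y powr (2/k)"
    and i9: "\<And>s y. s \<in> {a0<..<b0} \<Longrightarrow>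
               norm (Qgrad q W1 s y) \<le> c9 * w s y powr (-1/k) * W1 s y * W2 s y powr (1/k)"
    and g_Linf: "\<And>n. 1 \<le> n \<Longrightarrow> Linf_on ({a0<..<b0} \<times> UNIV) (\<lambda>(s,y). g n t s x y)"
  shows "\<forall>n::nat. 1 \<le> n \<longrightarrow>
     (\<exists>B. \<forall>s\<in>{a0<..<b0}. \<forall>y. \<bar>pdt w s y / (w s y)\<^sup>2\<bar> \<le> B)
   \<and> (\<exists>B. \<forall>s\<in>{a0<..<b0}. \<forall>y. norm (grad w s y /\<^sub>R (w s y)\<^sup>2) \<le> B)
   \<and> (\<forall>s\<in>{a0<..<b0}. \<forall>y.
        w s y \<le> c1 * w s y powr ((k-2)/k) * W1 s y powr (2/k)
      \<and> norm (Qgrad (qn \<phi> W1 \<eta> q n) w s y) \<le> (2*c2) * w s y powr ((k-1)/k) * W1 s y powr (1/k)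
      \<and> \<bar>trQD2 (qn \<phi> W1 \<eta> q n) w s y\<bar> \<le> (c3 + \<eta>*c8) * w s y powr ((k-2)/k) * W1 s y powr (2/k)
      \<and> \<bar>pdt w s y\<bar> \<le> c4 * w s y powr ((k-2)/k) * W1 s y powr (2/k)
      \<and> (\<forall>j. (\<forall>i. pdiff_y (qn \<phi> W1 \<eta> q n i j) s y) \<longrightarrow>
             \<bar>divq (qn \<phi> W1 \<eta> q n) j s y\<bar> \<le> (c5 + 4*c9) * w s y powr (-1/k) * W2 s y powr (1/k))
      \<and> norm (\<chi> i. F i s y) \<le> c6 * w s y powr (-1/k) * W2 s y powr (1/k)
      \<and> sqrt (V s y) \<le> c7 * w s y powr (-1/k) * W2 s y powr (1/k))
   \<and> Linf_on ({a0<..<b0} \<times> UNIV) (\<lambda>(s,y). g n t s x y)"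
proof (intro allI impI conjI)
  fix n :: nat assume n: "1 \<le> n"
  show "\<exists>B. \<forall>s\<in>{a0<..<b0}. \<forall>y. \<bar>pdt w s y / (w s y)\<^sup>2\<bar> \<le> B" by (rule w_bdd_t)
  show "\<exists>B. \<forall>s\<in>{a0<..<b0}. \<forall>y. norm (grad w s y /\<^sub>R (w s y)\<^sup>2) \<le> B" by (rule w_bdd_y)
  show "Linf_on ({a0<..<b0} \<times> UNIV) (\<lambda>(s,y). g n t s x y)" using g_Linf n by blast
  show "\<forall>s\<in>{a0<..<b0}. \<forall>y.
        w s y \<le> c1 * w s y powr ((k-2)/k) * W1 s y powr (2/k)
      \<and> norm (Qgrad (qn \<phi> W1 \<eta> q n) w s y) \<le> (2*c2) * w s y powr ((k-1)/k) * W1 s y powr (1/k)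
      \<and> \<bar>trQD2 (qn \<phi> W1 \<eta> q n) w s y\<bar> \<le> (c3 + \<eta>*c8) * w s y powr ((k-2)/k) * W1 s y powr (2/k)
      \<and> \<bar>pdt w s y\<bar> \<le> c4 * w s y powr ((k-2)/k) * W1 s y powr (2/k)
      \<and> (\<forall>j. (\<forall>i. pdiff_y (qn \<phi> W1 \<eta> q n i j) s y) \<longrightarrow>
             \<bar>divq (qn \<phi> W1 \<eta> q n) j s y\<bar> \<le> (c5 + 4*c9) * w s y powr (-1/k) * W2 s y powr (1/k))
      \<and> norm (\<chi> i. F i s y) \<le> c6 * w s y powr (-1/k) * W2 s y powr (1/k)
      \<and> sqrt (V s y) \<le> c7 * w s y powr (-1/k) * W2 s y powr (1/k)"
  proof (intro ballI allI conjI impI)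
    fix s y assume s: "s \<in> {a0<..<b0}"
    with ab t have s01: "s \<in> {0..1}" "s \<in> {0<..<1}" "s \<in> {0..t}" "s \<in> {0<..<t}" by auto
    note ell = H2_ell[OF s01(1), where y = y]
    have p: "0 \<le> \<phi> (W1 s y / real n)" "\<phi> (W1 s y / real n) \<le> 1" using phi_range by auto
    show "w s y \<le> c1 * w s y powr ((k-2)/k) * W1 s y powr (2/k)"
      and "\<bar>pdt w s y\<bar> \<le> c4 * w s y powr ((k-2)/k) * W1 s y powr (2/k)"
      and "norm (\<chi> i. F i s y) \<le> c6 * w s y powr (-1/k) * W2 s y powr (1/k)"
      and "sqrt (V s y) \<le> c7 * w s y powr (-1/k) * W2 s y powr (1/k)"
      using i1 i4 i6 i7 s by blast+
    have "norm (Qgrad (qn \<phi> W1 \<eta> q n) w s y) \<le> norm (Qgrad q w s y)"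
      using H2_eta p by (intro norm_Qgrad_qn_le ell) auto
    also have "\<dots> \<le> c2 * w s y powr ((k-1)/k) * W1 s y powr (1/k)" by (rule i2[OF s])
    also have "\<dots> \<le> (2*c2) * w s y powr ((k-1)/k) * W1 s y powr (1/k)"
      using cs(2) by (intro mult_right_mono) auto
    finally show "norm (Qgrad (qn \<phi> W1 \<eta> q n) w s y) \<le> (2*c2) * w s y powr ((k-1)/k) * W1 s y powr (1/k)" .
    have "\<bar>trQD2 (qn \<phi> W1 \<eta> q n) w s y\<bar> \<le> \<bar>trQD2 q w s y\<bar> + \<eta> * \<bar>lap w s y\<bar>"
      using H2_eta p by (intro abs_trQD2_qn_le) auto
    also have "\<dots> \<le> c3 * w s y powr ((k-2)/k) * W1 s y powr (2/k)
                     + \<eta> * (c8 * w s y powr ((k-2)/k) * W1 s y powr (2/k))"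
      using H2_eta by (intro add_mono mult_left_mono i3[OF s] i8[OF s]) auto
    finally show "\<bar>trQD2 (qn \<phi> W1 \<eta> q n) w s y\<bar> \<le> (c3 + \<eta>*c8) * w s y powr ((k-2)/k) * W1 s y powr (2/k)"
      by (simp add: algebra_simps)
    fix j assume qn_diff: "\<forall>i. pdiff_y (qn \<phi> W1 \<eta> q n i j) s y"
    let ?P = "w s y powr (-1/k) * W2 s y powr (1/k)"
    have W1_C12: "C12 {0<..<t} W1" and "0 \<le> W1 s y" using W1 s01(3) unfolding tdlf_def by blast+
    have "\<bar>divq (qn \<phi> W1 \<eta> q n) j s y\<bar> \<le> c5 * ?P + 4 * (c9 * ?P)"
    proof (rule abs_divq_qn_le)
      show "q i j s y = q j i s y" for i by (rule H2_sym)
      show "0 \<le> \<eta>" "0 < n" using H2_eta n by auto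
      show "(\<phi> has_real_derivative deriv \<phi> (W1 s y / real n)) (at (W1 s y / real n))"
        using phi_smooth[of 0] by (simp add: DERIV_deriv_iff_real_differentiable)
      show "\<bar>W1 s y / real n * deriv \<phi> (W1 s y / real n)\<bar> \<le> 2" by (rule phi_deriv)
      show "pdiff_y W1 s y" using W1_C12 s01(4) unfolding C12_def by blast
      show "isCont (\<lambda>h. q i j s (y + h *\<^sub>R axis i 1)) 0" for i
        using H1_lip[of i j] s01(2) unfolding C01_def by (intro isCont_line_of_continuous_on) auto
      show "pdiff_y (qn \<phi> W1 \<eta> q n i j) s y" for i using qn_diff by blast
      show "0 \<le> c9 * ?P" "0 \<le> c5 * ?P" using cs by auto
      show "norm (Qgrad q W1 s y) \<le> c9 * ?P * W1 s y" using i9[OF s] by (simp add: mult_ac)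
      show "\<bar>divq q j s y\<bar> \<le> c5 * ?P" if "\<forall>i. pdiff_y (q i j) s y"
        using i5[OF s that] by (simp add: mult.assoc)
    qed (use ell p \<open>0 \<le> W1 s y\<close> in auto)
    then show "\<bar>divq (qn \<phi> W1 \<eta> q n) j s y\<bar> \<le> (c5 + 4*c9) * w s y powr (-1/k) * W2 s y powr (1/k)"
      by (simp add: algebra_simps)
  qed
qed

end
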